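(* Let $X=L^\infty(\mathcal P)$ and assume that the family of all nonconstant rectifiable curves in $\mathcal P$ has zero $L^\infty$-modulus. Then $N^{1,\infty}(\mathcal P)=L^\infty(\mathcal P)$ and: (I) for every $E\subset\mathcal P$, $C_\infty(E)=0$ if $\mu(E)=0$ and $C_\infty(E)=1$ if $\mu(E)>0$; (II) if $A\subset\mathcal P$ is nonempty with $\mu(A)=0$, then $\chi_A\in N^{1,\infty}(\mathcal P)$ is weakly quasicontinuous but not quasicontinuous (so not every weakly quasicontinuous function is quasicontinuous); (III) if there is a closed set $F\subset\mathcal P$ with empty interior and $\mu(F)>0$, then $\chi_F\in N^{1,\infty}(\mathcal P)$ is not weakly quasicontinuous. Moreover, each of the following statements is equivalent to $\mu(\{x\})>0$ for every $x\in\mathcal P$: $C_\infty$ is an outer capacity; $C_\infty$ is a quasiouter capacity; every weakly quasicontinuous $u:\mathcal P\to[-\infty,\infty]$ is quasicontinuous; $C_\infty$ is an outer capacity for sets of zero capacity; $C_\infty(E)>0$ for every nonempty $E\subset\mathcal P$.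
   Context: Standing assumptions: $\mathcal P=(\mathcal P,d,\mu)$ is a metric space with a positive complete Borel measure $\mu$ such that $0<\mu(B)<\infty$ for every ball $B$; $\mu$ is extended as an outer measure to all subsets. $L^\infty(\mathcal P)$ is regarded as a space of everywhere-defined measurable functions with the (semi)norm $\|\cdot\|_{L^\infty}$. A family $\Gamma$ of curves has zero $L^\infty$-modulus if there is a Borel $\rho\in L^\infty(\mathcal P)$ with $\int_\gamma\rho\,ds=\infty$ for every $\gamma\in\Gamma$. A Borel $g:\mathcal P\to[0,\infty]$ is an upper gradient of $u:\mathcal P\to[-\infty,\infty]$ if $|u(\gamma(0))-u(\gamma(l_\gamma))|\le\int_\gamma g\,ds$ for every nonconstant rectifiable (arc-length parametrized) curve $\gamma:[0,l_\gamma]\to\mathcal P$. $N^{1,\infty}(\mathcal P)=\{u\in L^\infty:\|u\|_{N^{1,\infty}}:=\|u\|_{L^\infty}+\inf_g\|g\|_{L^\infty}<\infty\}$. $C_\infty(E)=\inf\{\|u\|_{N^{1,\infty}}:u\in N^{1,\infty},\ u\ge1\text{ on }E\}$. $C_\infty$ is a $c$-quasiouter capacity if $\inf\{C_\infty(G):G\supset E\text{ open}\}\le cC_\infty(E)$ for all $E$; quasiouter if for some $c\ge1$; outer if $c=1$; outer for sets of zero capacity if whenever $C_\infty(E)=0$ and $\varepsilon>0$ there is an open $G\supset E$ with $C_\infty(G)<\varepsilon$. $u$ is weakly quasicontinuous if for every $\varepsilon>0$ there is $E$ with $C_\infty(E)<\varepsilon$ and $u|_{\mathcal P\setminus E}$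 (real-valued) continuous; quasicontinuous if $E$ can be chosen open. *)

theory Defs
  imports "HOL-Analysis.Analysis" "HOL-Probability.Probability"
begin

text \<open>Standing assumptions on the metric measure space (P, d, mu); P is the type 'a.\<close>
definition mms :: "('a::metric_space) measure \<Rightarrow> bool" where
  "mms M \<longleftrightarrow> space M = UNIV \<and> sets borel \<subseteq> sets M \<and> complete_measure M \<and>
     (\<forall>x r. r > 0 \<longrightarrow> 0 < emeasure M (ball x r) \<and> emeasure M (ball x r) < \<infinity>)"

definition curve_length :: "(real \<Rightarrow> 'a::metric_space) \<Rightarrow> real \<Rightarrow> real \<Rightarrow> ereal" where
  "curve_length \<gamma> a b = Sup {ereal (\<Sum>i<n. dist (\<gamma> (p i)) (\<gamma> (p (Suc i)))) | n p.
       p 0 = a \<and> p n = b \<and> (\<forall>i<n. p i \<le> p (Suc i))}"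

definition arclength_curve :: "(real \<Rightarrow> 'a::metric_space) \<Rightarrow> real \<Rightarrow> bool" where
  "arclength_curve \<gamma> l \<longleftrightarrow> 0 < l \<and>
     (\<forall>s t. 0 \<le> s \<longrightarrow> s \<le> t \<longrightarrow> t \<le> l \<longrightarrow> curve_length \<gamma> s t = ereal (t - s))"

definition line_int :: "('a \<Rightarrow> ereal) \<Rightarrow> (real \<Rightarrow> 'a) \<Rightarrow> real \<Rightarrow> ereal" where
  "line_int g \<gamma> l = enn2ereal (\<integral>\<^sup>+ t. e2ennreal (g (\<gamma> t)) * indicator {0..l} t \<partial>lborel)"

definition linf_norm :: "'a measure \<Rightarrow> ('a \<Rightarrow> ereal) \<Rightarrow> ereal" where
  "linf_norm M u = esssup M (\<lambda>x. \<bar>u x\<bar>)"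

definition Linf :: "'a measure \<Rightarrow> ('a \<Rightarrow> ereal) set" where
  "Linf M = {u. u \<in> borel_measurable M \<and> linf_norm M u < \<infinity>}"

text \<open>Upper gradient inequality, with the convention that the left-hand side is infinite
  whenever one of the two values is infinite.\<close>
definition ug_ineq :: "ereal \<Rightarrow> ereal \<Rightarrow> ereal \<Rightarrow> bool" where
  "ug_ineq a b I \<longleftrightarrow> (if \<bar>a\<bar> = \<infinity> \<or> \<bar>b\<bar> = \<infinity> then I = \<infinity> else \<bar>a - b\<bar> \<le> I)"

definition upper_gradient :: "('a::metric_space \<Rightarrow> ereal) \<Rightarrow> ('a \<Rightarrow> ereal) \<Rightarrow> bool" where
  "upper_gradient u g \<longleftrightarrow> g \<in> borel_measurable borel \<and> (\<forall>x. 0 \<le> g x) \<and>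
     (\<forall>\<gamma> l. arclength_curve \<gamma> l \<longrightarrow> ug_ineq (u (\<gamma> 0)) (u (\<gamma> l)) (line_int g \<gamma> l))"

definition n1inf_norm :: "('a::metric_space) measure \<Rightarrow> ('a \<Rightarrow> ereal) \<Rightarrow> ereal" where
  "n1inf_norm M u = linf_norm M u + (INF g \<in> {g. upper_gradient u g}. linf_norm M g)"

definition N1inf :: "('a::metric_space) measure \<Rightarrow> ('a \<Rightarrow> ereal) set" where
  "N1inf M = {u. u \<in> Linf M \<and> n1inf_norm M u < \<infinity>}"

definition Cinf :: "('a::metric_space) measure \<Rightarrow> 'a set \<Rightarrow> ereal" where
  "Cinf M E = (INF u \<in> {u \<in> N1inf M. \<forall>x\<in>E. 1 \<le> u x}. n1inf_norm M u)"

text \<open>The family of all nonconstant rectifiable curves has zero L^infinity-modulus.\<close>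
definition all_curves_zero_modulus :: "('a::metric_space) measure \<Rightarrow> bool" where
  "all_curves_zero_modulus M \<longleftrightarrow> (\<exists>\<rho>. \<rho> \<in> borel_measurable borel \<and> (\<forall>x. 0 \<le> \<rho> x) \<and>
      \<rho> \<in> Linf M \<and> (\<forall>\<gamma> l. arclength_curve \<gamma> l \<longrightarrow> line_int \<rho> \<gamma> l = \<infinity>))"

definition quasiouter_c :: "('a::metric_space) measure \<Rightarrow> ereal \<Rightarrow> bool" where
  "quasiouter_c M c \<longleftrightarrow>
     (\<forall>E. (INF G \<in> {G. open G \<and> E \<subseteq> G}. Cinf M G) \<le> c * Cinf M E)"

definition quasiouter :: "('a::metric_space) measure \<Rightarrow> bool" where
  "quasiouter M \<longleftrightarrow> (\<exists>c::real. c \<ge> 1 \<and> quasiouter_c M (ereal c))"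

definition outer_cap :: "('a::metric_space) measure \<Rightarrow> bool" where
  "outer_cap M \<longleftrightarrow> quasiouter_c M 1"

definition outer_zero_cap :: "('a::metric_space) measure \<Rightarrow> bool" where
  "outer_zero_cap M \<longleftrightarrow> (\<forall>E \<epsilon>. Cinf M E = 0 \<longrightarrow> \<epsilon> > 0 \<longrightarrow>
      (\<exists>G. open G \<and> E \<subseteq> G \<and> Cinf M G < ereal \<epsilon>))"

definition weakly_qc :: "('a::metric_space) measure \<Rightarrow> ('a \<Rightarrow> ereal) \<Rightarrow> bool" where
  "weakly_qc M u \<longleftrightarrow> (\<forall>\<epsilon>>0. \<exists>E. Cinf M E < ereal \<epsilon> \<and>
      (\<forall>x\<in>-E. \<bar>u x\<bar> \<noteq> \<infinity>) \<and> continuous_on (-E) (\<lambda>x. real_of_ereal (u x)))"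

definition quasicont :: "('a::metric_space) measure \<Rightarrow> ('a \<Rightarrow> ereal) \<Rightarrow> bool" where
  "quasicont M u \<longleftrightarrow> (\<forall>\<epsilon>>0. \<exists>E. open E \<and> Cinf M E < ereal \<epsilon> \<and>
      (\<forall>x\<in>-E. \<bar>u x\<bar> \<noteq> \<infinity>) \<and> continuous_on (-E) (\<lambda>x. real_of_ereal (u x)))"

end

theory Submission
  imports Defs
begin

text \<open>If some bounded Borel \<open>\<rho>\<close> has infinite integral along every nonconstant rectifiable curve,
  then so does every \<open>\<epsilon> \<rho>\<close>, and \<open>\<epsilon> \<rho>\<close> is an upper gradient of any function whatsoever. Hence
  the \<open>N\<^sup>1\<^sup>,\<^sup>\<infinity>\<close>-norm of \<open>u\<close> is just \<open>\<parallel>u\<parallel>\<^sub>\<infinity>\<close>, and the capacity of \<open>E\<close> is the least essential supremum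
  of a function that is \<open>\<ge> 1\<close> on \<open>E\<close>: this is \<open>0\<close> for \<open>\<mu>\<close>-null \<open>E\<close> (test with \<open>\<chi>\<^sub>E\<close>) and \<open>1\<close>
  otherwise. All statements about (quasi)outer capacities and quasicontinuity reduce to this
  dichotomy together with the fact that nonempty open sets have positive measure, hence
  capacity \<open>1\<close>: a null point \<open>x\<close> has capacity \<open>0\<close> while all its neighbourhoods have capacity
  \<open>1\<close>, and without null points every nonempty set has capacity \<open>1\<close>, so that only the empty
  set has small capacity.\<close>

lemma e2ennreal_ereal_mult: "0 < c \<Longrightarrow> e2ennreal (ereal c * y) = ennreal c * e2ennreal y"
  by (cases y) (auto simp: ennreal_mult' e2ennreal_neg mult_nonpos_nonneg ennreal_mult_top)

text \<open>Unlike \<open>nn_integral_cmult\<close>, no measurability of \<open>f\<close> is needed.\<close>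
lemma nn_integral_cmult_ge:
  fixes f :: "'b \<Rightarrow> ennreal"
  shows "c * integral\<^sup>N N f \<le> (\<integral>\<^sup>+x. c * f x \<partial>N)"
proof -
  have "c * integral\<^sup>N N f = (SUP g \<in> {g. simple_function N g \<and> g \<le> f}. c * integral\<^sup>S N g)"
    by (simp add: nn_integral_def SUP_mult_left_ennreal)
  also have "\<dots> \<le> (\<integral>\<^sup>+x. c * f x \<partial>N)"
  proof (rule SUP_least)
    fix g assume g: "g \<in> {g. simple_function N g \<and> g \<le> f}"
    then have "c * integral\<^sup>S N g = (\<integral>\<^sup>+x. c * g x \<partial>N)"
      by (subst nn_integral_eq_simple_integral) auto
    also have "\<dots> \<le> (\<integral>\<^sup>+x. c * f x \<partial>N)"
      using g by (intro nn_integral_mono) (auto simp: le_fun_def intro: mult_left_mono)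
    finally show "c * integral\<^sup>S N g \<le> (\<integral>\<^sup>+x. c * f x \<partial>N)" .
  qed
  finally show ?thesis .
qed

lemma line_int_cmult_eq_infinity:
  assumes "0 < c" "line_int g \<gamma> l = \<infinity>"
  shows "line_int (\<lambda>x. ereal c * g x) \<gamma> l = \<infinity>"
proof -
  let ?h = "\<lambda>t. e2ennreal (g (\<gamma> t)) * indicator {0..l} t"
  have "integral\<^sup>N lborel ?h = top"
    using assms(2) unfolding line_int_def by (metis e2ennreal_enn2ereal e2ennreal_infty)
  then have "top \<le> ennreal c * integral\<^sup>N lborel ?h"
    using assms(1) by (simp add: ennreal_mult_top)
  also have "\<dots> \<le> (\<integral>\<^sup>+t. ennreal c * ?h t \<partial>lborel)"
    by (rule nn_integral_cmult_ge)
  also have "\<dots> = (\<integral>\<^sup>+t. e2ennreal (ereal c * g (\<gamma> t)) * indicator {0..l} t \<partial>lborel)"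
    using assms(1) by (simp add: e2ennreal_ereal_mult mult.assoc)
  finally show ?thesis
    unfolding line_int_def by (simp add: top_unique)
qed

lemma upper_gradient_if_line_int_eq_infinity:
  assumes "g \<in> borel_measurable borel" "\<And>x. 0 \<le> g x"
    and "\<And>\<gamma> l. arclength_curve \<gamma> l \<Longrightarrow> line_int g \<gamma> l = \<infinity>"
  shows "upper_gradient u g"
  using assms by (simp add: upper_gradient_def ug_ineq_def)

lemma mms_space_eq_UNIV: "mms M \<Longrightarrow> space M = UNIV"
  by (simp add: mms_def)

lemma mms_sets_borel: "mms M \<Longrightarrow> A \<in> sets borel \<Longrightarrow> A \<in> sets M"
  by (auto simp: mms_def)

lemma mms_singleton_in_sets: "mms M \<Longrightarrow> {x} \<in> sets M"
  by (simp add: mms_sets_borel)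

lemma mms_emeasure_open_pos:
  assumes "mms M" "open G" "G \<noteq> {}"
  shows "0 < emeasure M G"
proof -
  obtain x r where r: "r > 0" "ball x r \<subseteq> G"
    using assms(2,3) open_contains_ball_eq by blast
  have "0 < emeasure M (ball x r)"
    using assms(1) r(1) by (simp add: mms_def)
  also have "\<dots> \<le> emeasure M G"
    using assms r(2) by (intro emeasure_mono) (auto intro: mms_sets_borel)
  finally show ?thesis .
qed

lemma mms_emeasure_space_neq_0: "mms M \<Longrightarrow> emeasure M (space M) \<noteq> 0"
  using mms_emeasure_open_pos[of M UNIV] by (simp add: mms_space_eq_UNIV)

lemma mms_null_set_if_outer_measure_of_eq_0:
  assumes "mms M" "outer_measure_of M E = 0"
  shows "E \<in> null_sets M"
proof -
  obtain B where B: "B \<in> sets M" "E \<subseteq> B" "outer_measure_of M E = emeasure M B"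
    using outer_measure_of_attain[of E M] assms(1) by (auto simp: mms_space_eq_UNIV)
  then have "B \<in> null_sets M"
    using assms(2) by auto
  then show ?thesis
    using complete_measure.complete2[of M E B] assms(1) B(2) by (simp add: mms_def)
qed

lemma linf_norm_nonneg: "emeasure M (space M) \<noteq> 0 \<Longrightarrow> 0 \<le> linf_norm M u"
  using esssup_mono[of "\<lambda>x. 0" M "\<lambda>x. \<bar>u x\<bar>"] esssup_const[of M "0::ereal"]
  by (simp add: linf_norm_def)

lemma linf_norm_const: "emeasure M (space M) \<noteq> 0 \<Longrightarrow> linf_norm M (\<lambda>x. c) = \<bar>c\<bar>"
  by (simp add: linf_norm_def esssup_const)

lemma linf_norm_cmult:
  assumes "0 < c" "\<And>x. 0 \<le> u x"
  shows "linf_norm M (\<lambda>x. ereal c * u x) = ereal c * linf_norm M u"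
proof -
  have "(\<lambda>x. \<bar>ereal c * u x\<bar>) = (\<lambda>x. ereal c * \<bar>u x\<bar>)"
    using assms by (auto simp: abs_ereal_ge0)
  then show ?thesis
    unfolding linf_norm_def using esssup_cmult[OF assms(1)] by simp
qed

lemma linf_norm_indicator_le:
  assumes "A \<in> sets M" "0 \<le> c" "AE x in M. x \<in> A \<longrightarrow> 1 \<le> c"
  shows "linf_norm M (indicator A :: _ \<Rightarrow> ereal) \<le> c"
proof -
  have "(\<lambda>x. \<bar>indicator A x :: ereal\<bar>) = indicator A"
    by (auto simp: indicator_def)
  then show ?thesis
    unfolding linf_norm_def using assms
    by (intro esssup_I) (auto elim!: eventually_mono simp: indicator_def)
qed

lemma indicator_in_Linf: "A \<in> sets M \<Longrightarrow> indicator A \<in> Linf M"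
  using linf_norm_indicator_le[of A M 1] by (auto simp: Linf_def intro: le_less_trans)

lemma outer_measure_of_gt_linf_norm_eq_0:
  assumes "u \<in> borel_measurable M" "E \<subseteq> space M" "\<And>x. x \<in> E \<Longrightarrow> linf_norm M u < \<bar>u x\<bar>"
  shows "outer_measure_of M E = 0"
proof -
  let ?S = "{x \<in> space M. esssup M (\<lambda>x. \<bar>u x\<bar>) < \<bar>u x\<bar>}"
  have "?S \<in> sets M"
    using assms(1) by measurable
  moreover have "E \<subseteq> ?S"
    using assms(2,3) by (auto simp: linf_norm_def)
  ultimately have "outer_measure_of M E \<le> emeasure M ?S"
    using outer_measure_of_mono[of E ?S M] by simp
  then show ?thesis
    using esssup_zero_measure[of M "\<lambda>x. \<bar>u x\<bar>"] by simp
qed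

lemma INF_upper_gradient_linf_norm_eq_0:
  assumes "mms M" "all_curves_zero_modulus M"
  shows "(INF g\<in>{g. upper_gradient u g}. linf_norm M g) = 0"
proof -
  obtain \<rho> where \<rho>: "\<rho> \<in> borel_measurable borel" "\<And>x. 0 \<le> \<rho> x" "\<rho> \<in> Linf M"
     "\<And>\<gamma> l. arclength_curve \<gamma> l \<Longrightarrow> line_int \<rho> \<gamma> l = \<infinity>"
    using assms(2) unfolding all_curves_zero_modulus_def by blast
  obtain k where k: "linf_norm M \<rho> = ereal k" "0 \<le> k"
    using \<rho>(3) linf_norm_nonneg[OF mms_emeasure_space_neq_0[OF assms(1)], of \<rho>]
    by (cases "linf_norm M \<rho>") (auto simp: Linf_def)
  have "(INF g\<in>{g. upper_gradient u g}. linf_norm M g) \<le> 0 + ereal e" if "0 < e" for e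
  proof -
    define c where "c = e / (k + 1)"
    have c: "0 < c" "c * k \<le> e"
      using \<open>0 < e\<close> k(2) by (auto simp: c_def field_simps)
    have "(\<lambda>x. ereal c * \<rho> x) \<in> borel_measurable borel"
      using \<rho>(1) by measurable
    then have "upper_gradient u (\<lambda>x. ereal c * \<rho> x)"
      using \<rho>(2,4) c(1)
      by (intro upper_gradient_if_line_int_eq_infinity line_int_cmult_eq_infinity) simp_all
    then have "(INF g\<in>{g. upper_gradient u g}. linf_norm M g) \<le> linf_norm M (\<lambda>x. ereal c * \<rho> x)"
      by (intro INF_lower) simp
    also have "\<dots> = ereal (c * k)"
      using linf_norm_cmult[of c \<rho>] c(1) \<rho>(2) k(1) by simp
    also have "\<dots> \<le> 0 + ereal e"
      using c(2) by simp
    finally show ?thesis .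
  qed
  then have "(INF g\<in>{g. upper_gradient u g}. linf_norm M g) \<le> 0"
    by (rule ereal_le_epsilon2)
  moreover have "0 \<le> (INF g\<in>{g. upper_gradient u g}. linf_norm M g)"
    using linf_norm_nonneg[OF mms_emeasure_space_neq_0[OF assms(1)]] by (intro INF_greatest)
  ultimately show ?thesis
    by simp
qed

context
  fixes M :: "('a::metric_space) measure"
  assumes mms: "mms M" and curves_null: "all_curves_zero_modulus M"
begin

lemma n1inf_norm_eq_linf_norm: "n1inf_norm M u = linf_norm M u"
  by (simp add: n1inf_norm_def INF_upper_gradient_linf_norm_eq_0[OF mms curves_null])

lemma N1inf_eq_Linf: "N1inf M = Linf M"
  by (auto simp: N1inf_def Linf_def n1inf_norm_eq_linf_norm)

lemma Cinf_le_1: "Cinf M E \<le> 1"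
proof -
  have "(\<lambda>x. 1) \<in> {u \<in> N1inf M. \<forall>x\<in>E. 1 \<le> u x}" "n1inf_norm M (\<lambda>x. 1) = 1"
    using linf_norm_const[OF mms_emeasure_space_neq_0[OF mms], of 1]
    by (simp_all add: N1inf_eq_Linf Linf_def n1inf_norm_eq_linf_norm)
  then show ?thesis
    unfolding Cinf_def by (intro INF_lower2[of "\<lambda>x. 1"]) simp_all
qed

lemma Cinf_eq_0_if_null:
  assumes "outer_measure_of M E = 0"
  shows "Cinf M E = 0"
proof -
  have E: "E \<in> null_sets M"
    by (rule mms_null_set_if_outer_measure_of_eq_0[OF mms assms])
  then have "indicator E \<in> {u \<in> N1inf M. \<forall>x\<in>E. 1 \<le> u x}"
    using indicator_in_Linf[of E M] by (auto simp: N1inf_eq_Linf)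
  moreover have "n1inf_norm M (indicator E) \<le> 0"
    using E AE_not_in[OF E]
    by (auto simp: n1inf_norm_eq_linf_norm intro!: linf_norm_indicator_le)
  ultimately have "Cinf M E \<le> 0"
    unfolding Cinf_def by (rule INF_lower2[where f = "n1inf_norm M"])
  moreover have "0 \<le> Cinf M E"
    unfolding Cinf_def using linf_norm_nonneg[OF mms_emeasure_space_neq_0[OF mms]]
    by (intro INF_greatest) (simp add: n1inf_norm_eq_linf_norm)
  ultimately show ?thesis
    by simp
qed

text \<open>A test function of norm \<open>< 1\<close> exceeds its essential supremum on all of \<open>E\<close>.\<close>
lemma Cinf_eq_1_if_pos:
  assumes "outer_measure_of M E > 0"
  shows "Cinf M E = 1"
proof -
  have "1 \<le> n1inf_norm M u" if u: "u \<in> N1inf M" "\<forall>x\<in>E. 1 \<le> u x" for u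
  proof (rule ccontr)
    assume "\<not> 1 \<le> n1inf_norm M u"
    then have small: "linf_norm M u < 1"
      by (simp add: n1inf_norm_eq_linf_norm)
    have "linf_norm M u < \<bar>u x\<bar>" if "x \<in> E" for x
    proof -
      have "1 \<le> \<bar>u x\<bar>"
        using u(2) that by (cases "u x") auto
      with small show ?thesis
        by (rule less_le_trans)
    qed
    then have "outer_measure_of M E = 0"
      using u(1) by (intro outer_measure_of_gt_linf_norm_eq_0)
        (auto simp: N1inf_eq_Linf Linf_def mms_space_eq_UNIV[OF mms])
    then show False
      using assms by simp
  qed
  then have "1 \<le> Cinf M E"
    unfolding Cinf_def by (intro INF_greatest) blast
  then show ?thesis
    using Cinf_le_1[of E] by simp
qed

lemma Cinf_lt_1_imp_null:
  assumes "Cinf M E < 1"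
  shows "outer_measure_of M E = 0"
proof (rule ccontr)
  assume "outer_measure_of M E \<noteq> 0"
  then have "Cinf M E = 1"
    by (intro Cinf_eq_1_if_pos) (simp add: zero_less_iff_neq_zero)
  with assms show False
    by simp
qed

lemma Cinf_open_nonempty:
  assumes "open G" "G \<noteq> {}"
  shows "Cinf M G = 1"
proof (rule Cinf_eq_1_if_pos)
  have "G \<in> sets M"
    using assms(1) by (intro mms_sets_borel[OF mms] borel_open)
  then show "outer_measure_of M G > 0"
    using mms_emeasure_open_pos[OF mms assms] by simp
qed

lemma INF_open_superset_Cinf_eq_1:
  assumes "E \<noteq> {}"
  shows "(INF G \<in> {G. open G \<and> E \<subseteq> G}. Cinf M G) = 1"
proof -
  have "(INF G \<in> {G. open G \<and> E \<subseteq> G}. Cinf M G) = (INF G \<in> {G. open G \<and> E \<subseteq> G}. 1)"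
    using assms by (intro INF_cong) (auto intro: Cinf_open_nonempty)
  moreover have "{G. open G \<and> E \<subseteq> G} \<noteq> {}"
    using open_UNIV by blast
  ultimately show ?thesis
    by simp
qed

lemma indicator_null_weakly_qc_not_quasicont:
  assumes "A \<noteq> {}" "outer_measure_of M A = 0"
  shows "indicator A \<in> N1inf M" "weakly_qc M (indicator A)" "\<not> quasicont M (indicator A)"
proof -
  have A: "A \<in> null_sets M"
    by (rule mms_null_set_if_outer_measure_of_eq_0[OF mms assms(2)])
  then show "indicator A \<in> N1inf M"
    using indicator_in_Linf[of A M] by (simp add: N1inf_eq_Linf null_setsD2)
  have "continuous_on (- A) (\<lambda>x. real_of_ereal (indicator A x))"
    using continuous_on_const[of "- A" 0] by (rule continuous_on_eq) simp
  then show "weakly_qc M (indicator A)"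
    unfolding weakly_qc_def using Cinf_eq_0_if_null[OF assms(2)] by (auto intro!: exI[of _ A])
  show "\<not> quasicont M (indicator A)"
  proof
    assume "quasicont M (indicator A)"
    then obtain G where G: "open G" "Cinf M G < 1"
      "continuous_on (- G) (\<lambda>x. real_of_ereal (indicator A x))"
      unfolding quasicont_def by (metis one_ereal_def zero_less_one)
    then have "G = {}"
      using Cinf_open_nonempty by fastforce
    then have "open {x. (1/2::real) < real_of_ereal (indicator A x)}"
      using G(3) by (intro open_Collect_less) simp_all
    also have "{x. (1/2::real) < real_of_ereal (indicator A x)} = A"
      by (auto simp: indicator_def)
    finally show False
      using mms_emeasure_open_pos[OF mms _ assms(1)] A by (simp add: null_setsD1)
  qed
qed

text \<open>Continuity of \<open>\<chi>\<^sub>F\<close> at a point \<open>x \<in> F \<setminus> E\<close> forces a ball around \<open>x\<close> minus \<open>E\<close> into \<open>F\<close>;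
  as \<open>F\<close> has empty interior, the nonempty open set \<open>B(x, \<delta>) \<setminus> F\<close> then lies in \<open>E\<close>.\<close>
lemma indicator_closed_not_weakly_qc:
  assumes "closed F" "interior F = {}" "outer_measure_of M F > 0"
  shows "indicator F \<in> N1inf M" "\<not> weakly_qc M (indicator F)"
proof -
  show "indicator F \<in> N1inf M"
    using indicator_in_Linf[of F M] mms_sets_borel[OF mms] assms(1)
    by (simp add: N1inf_eq_Linf)
  show "\<not> weakly_qc M (indicator F)"
  proof
    assume "weakly_qc M (indicator F)"
    then obtain E where E: "Cinf M E < 1"
      and cont: "continuous_on (- E) (\<lambda>x. real_of_ereal (indicator F x))"
      unfolding weakly_qc_def by (metis one_ereal_def zero_less_one)
    have E0: "outer_measure_of M E = 0"
      by (rule Cinf_lt_1_imp_null[OF E])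
    obtain x where x: "x \<in> F" "x \<notin> E"
      using outer_measure_of_mono[of F E M] E0 assms(3) by force
    then obtain d where d: "d > 0" and close: "\<And>y. y \<in> - E \<Longrightarrow> dist y x < d \<Longrightarrow>
        dist (real_of_ereal (indicator F y)) (real_of_ereal (indicator F x)) < 1"
      using cont unfolding continuous_on_iff by (metis ComplI zero_less_one)
    have "ball x d - F \<subseteq> E"
      using x close by (force simp: indicator_def dist_commute)
    moreover have "ball x d - F \<noteq> {}"
      using d assms(2) interior_maximal[of "ball x d" F] by auto
    ultimately have "0 < outer_measure_of M E"
      using mms_emeasure_open_pos[OF mms, of "ball x d - F"] mms_sets_borel[OF mms] assms(1)
        outer_measure_of_mono[of "ball x d - F" E M] by (auto simp: open_Diff)
    then show False
      using E0 by simp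
  qed
qed

lemma null_point_if_not_atoms:
  assumes "\<not> (\<forall>x. emeasure M {x} > 0)"
  obtains x where "outer_measure_of M {x} = 0"
  using assms mms_singleton_in_sets[OF mms] by (auto simp: not_gr_zero)

lemma Cinf_nonempty_if_atoms:
  assumes "\<forall>x. emeasure M {x} > 0" "E \<noteq> {}"
  shows "Cinf M E = 1"
proof -
  obtain x where "x \<in> E"
    using assms(2) by blast
  then have "outer_measure_of M {x} \<le> outer_measure_of M E"
    by (intro outer_measure_of_mono) simp
  moreover have "0 < outer_measure_of M {x}"
    using assms(1) mms_singleton_in_sets[OF mms] by simp
  ultimately show ?thesis
    by (intro Cinf_eq_1_if_pos) simp
qed

lemma atoms_iff_Cinf_pos: "(\<forall>x. emeasure M {x} > 0) \<longleftrightarrow> (\<forall>E. E \<noteq> {} \<longrightarrow> Cinf M E > 0)"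
proof
  show "\<forall>E. E \<noteq> {} \<longrightarrow> Cinf M E > 0" if "\<forall>x. emeasure M {x} > 0"
    using Cinf_nonempty_if_atoms[OF that] by simp
next
  assume pos: "\<forall>E. E \<noteq> {} \<longrightarrow> Cinf M E > 0"
  show "\<forall>x. emeasure M {x} > 0"
  proof (rule ccontr)
    assume "\<not> (\<forall>x. emeasure M {x} > 0)"
    then obtain x where "outer_measure_of M {x} = 0"
      by (rule null_point_if_not_atoms)
    then show False
      using pos[rule_format, of "{x}"] Cinf_eq_0_if_null[of "{x}"] by simp
  qed
qed

lemma outer_cap_if_atoms:
  assumes "\<forall>x. emeasure M {x} > 0"
  shows "outer_cap M"
  unfolding outer_cap_def quasiouter_c_def
proof
  fix E :: "'a set"
  show "(INF G \<in> {G. open G \<and> E \<subseteq> G}. Cinf M G) \<le> 1 * Cinf M E"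
  proof (cases "E = {}")
    case True
    then show ?thesis
      using Cinf_eq_0_if_null[of "{}"] by (intro INF_lower2[of "{}"]) auto
  qed (simp add: INF_open_superset_Cinf_eq_1 Cinf_nonempty_if_atoms[OF assms])
qed

lemma atoms_if_quasiouter:
  assumes "quasiouter M"
  shows "\<forall>x. emeasure M {x} > 0"
proof (rule ccontr)
  assume "\<not> (\<forall>x. emeasure M {x} > 0)"
  then obtain x where "outer_measure_of M {x} = 0"
    by (rule null_point_if_not_atoms)
  then have "Cinf M {x} = 0"
    by (rule Cinf_eq_0_if_null)
  moreover obtain c :: real where "quasiouter_c M (ereal c)"
    using assms unfolding quasiouter_def by blast
  then have "(INF G \<in> {G. open G \<and> {x} \<subseteq> G}. Cinf M G) \<le> ereal c * Cinf M {x}"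
    unfolding quasiouter_c_def by blast
  ultimately show False
    using INF_open_superset_Cinf_eq_1[of "{x}"] by simp
qed

lemma atoms_iff_outer_cap: "(\<forall>x. emeasure M {x} > 0) \<longleftrightarrow> outer_cap M"
  and atoms_iff_quasiouter: "(\<forall>x. emeasure M {x} > 0) \<longleftrightarrow> quasiouter M"
proof -
  have "outer_cap M \<Longrightarrow> quasiouter M"
    unfolding outer_cap_def quasiouter_def by (intro exI[of _ 1]) (simp add: one_ereal_def)
  then show "(\<forall>x. emeasure M {x} > 0) \<longleftrightarrow> outer_cap M"
    "(\<forall>x. emeasure M {x} > 0) \<longleftrightarrow> quasiouter M"
    using outer_cap_if_atoms atoms_if_quasiouter by blast+
qed

lemma atoms_iff_weakly_qc_imp_quasicont:
  "(\<forall>x. emeasure M {x} > 0) \<longleftrightarrow> (\<forall>u. weakly_qc M u \<longrightarrow> quasicont M u)"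
proof
  assume atoms: "\<forall>x. emeasure M {x} > 0"
  show "\<forall>u. weakly_qc M u \<longrightarrow> quasicont M u"
  proof (intro allI impI)
    fix u assume "weakly_qc M u"
    show "quasicont M u"
      unfolding quasicont_def
    proof (intro allI impI)
      fix e :: real assume "0 < e"
      then obtain E where E: "Cinf M E < ereal e" "\<forall>x\<in>-E. \<bar>u x\<bar> \<noteq> \<infinity>"
        "continuous_on (-E) (\<lambda>x. real_of_ereal (u x))"
        using \<open>weakly_qc M u\<close> unfolding weakly_qc_def by blast
      text \<open>Either \<open>E = {}\<close> is already open, or \<open>Cinf M E = 1\<close> and the open set \<open>UNIV\<close> is as small.\<close>
      show "\<exists>E. open E \<and> Cinf M E < ereal e \<and> (\<forall>x\<in>-E. \<bar>u x\<bar> \<noteq> \<infinity>) \<and>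
          continuous_on (-E) (\<lambda>x. real_of_ereal (u x))"
      proof (cases "E = {}")
        case True
        with E show ?thesis
          by (intro exI[of _ E]) simp
      next
        case False
        then have "Cinf M UNIV < ereal e"
          using E(1) Cinf_nonempty_if_atoms[OF atoms, of UNIV] Cinf_nonempty_if_atoms[OF atoms, of E]
          by simp
        then show ?thesis
          by (intro exI[of _ UNIV]) simp
      qed
    qed
  qed
next
  assume weakly_qc_imp_qc: "\<forall>u. weakly_qc M u \<longrightarrow> quasicont M u"
  show "\<forall>x. emeasure M {x} > 0"
  proof (rule ccontr)
    assume "\<not> (\<forall>x. emeasure M {x} > 0)"
    then obtain x where "outer_measure_of M {x} = 0"
      by (rule null_point_if_not_atoms)
    then have "weakly_qc M (indicator {x})" "\<not> quasicont M (indicator {x})"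
      using indicator_null_weakly_qc_not_quasicont[of "{x}"] by simp_all
    with weakly_qc_imp_qc show False
      by blast
  qed
qed

lemma atoms_iff_outer_zero_cap: "(\<forall>x. emeasure M {x} > 0) \<longleftrightarrow> outer_zero_cap M"
proof
  assume atoms: "\<forall>x. emeasure M {x} > 0"
  have "E = {}" if "Cinf M E = 0" for E
    using that Cinf_nonempty_if_atoms[OF atoms, of E] by auto
  then show "outer_zero_cap M"
    unfolding outer_zero_cap_def using Cinf_eq_0_if_null[of "{}"]
    by (auto intro!: exI[of _ "{}"])
next
  assume zero_cap: "outer_zero_cap M"
  show "\<forall>x. emeasure M {x} > 0"
  proof (rule ccontr)
    assume "\<not> (\<forall>x. emeasure M {x} > 0)"
    then obtain x where "outer_measure_of M {x} = 0"
      by (rule null_point_if_not_atoms)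
    then obtain G where G: "open G" "x \<in> G" "Cinf M G < ereal (1/2)"
      using zero_cap[unfolded outer_zero_cap_def, rule_format, of "{x}" "1/2"]
        Cinf_eq_0_if_null[of "{x}"] by auto
    then have "Cinf M G = 1"
      by (intro Cinf_open_nonempty) auto
    with G(3) show False
      by (simp add: one_ereal_def)
  qed
qed

end

theorem theorem6p2:
  fixes M :: "('a::metric_space) measure"
  assumes "mms M"
    and "all_curves_zero_modulus M"
  shows "N1inf M = Linf M
    \<and> (\<forall>E. (outer_measure_of M E = 0 \<longrightarrow> Cinf M E = 0) \<and> (outer_measure_of M E > 0 \<longrightarrow> Cinf M E = 1))
    \<and> (\<forall>A. A \<noteq> {} \<and> outer_measure_of M A = 0 \<longrightarrow>
         indicator A \<in> N1inf M \<and> weakly_qc M (indicator A) \<and> \<not> quasicont M (indicator A))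
    \<and> (\<forall>F. closed F \<and> interior F = {} \<and> outer_measure_of M F > 0 \<longrightarrow>
         indicator F \<in> N1inf M \<and> \<not> weakly_qc M (indicator F))
    \<and> ((\<forall>x. emeasure M {x} > 0) \<longleftrightarrow> outer_cap M)
    \<and> ((\<forall>x. emeasure M {x} > 0) \<longleftrightarrow> quasiouter M)
    \<and> ((\<forall>x. emeasure M {x} > 0) \<longleftrightarrow> (\<forall>u. weakly_qc M u \<longrightarrow> quasicont M u))
    \<and> ((\<forall>x. emeasure M {x} > 0) \<longleftrightarrow> outer_zero_cap M)
    \<and> ((\<forall>x. emeasure M {x} > 0) \<longleftrightarrow> (\<forall>E. E \<noteq> {} \<longrightarrow> Cinf M E > 0))"
  using indicator_null_weakly_qc_not_quasicont[OF assms] indicator_closed_not_weakly_qc[OF assms]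
  by (intro conjI N1inf_eq_Linf[OF assms] atoms_iff_outer_cap[OF assms]
      atoms_iff_quasiouter[OF assms] atoms_iff_weakly_qc_imp_quasicont[OF assms]
      atoms_iff_outer_zero_cap[OF assms] atoms_iff_Cinf_pos[OF assms])
    (simp_all add: Cinf_eq_0_if_null[OF assms] Cinf_eq_1_if_pos[OF assms])

end
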